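(* Let $f:[-1,1]\to\mathbb{R}$ be continuous and non-decreasing such that $\kappa(\boldsymbol{x},\boldsymbol{y})=f(\langle\boldsymbol{x},\boldsymbol{y}\rangle/n)$ is a valid (positive semidefinite) kernel on $\{-1,+1\}^n$. Let $\mathcal{U}=\{\boldsymbol{u}^1,\ldots,\boldsymbol{u}^p\}\subset\{-1,+1\}^n$ be such that the real $p\times p$ matrix $C$ with entries $c_{\eta\xi}=f(\langle\boldsymbol{u}^\xi,\boldsymbol{u}^\eta\rangle/n)$ is invertible, and let $\rho>0$. The recurrent kernel associative memory (RKAM) is defined as follows: for each $i=1,\ldots,n$, let $\boldsymbol{\beta}_i=(\beta_i^1,\ldots,\beta_i^p)$ be the solution of $$\min\; Q(\boldsymbol{\beta}_i)=\tfrac12\sum_{\xi,\eta=1}^p\beta_i^\xi\beta_i^\eta u_i^\xi u_i^\eta\kappa(\boldsymbol{u}^\xi,\boldsymbol{u}^\eta)-\sum_{\xi=1}^p\beta_i^\xi\quad\text{subject to } 0\le\beta_i^\xi\le\rho,\ \xi=1,\ldots,p,$$ and the state evolves by $x_i(t+1)=\mathrm{sgn}\big(\sum_{\xi=1}^p\beta_i^\xi u_i^\xi\kappa(\boldsymbol{u}^\xi,\boldsymbol{x}(t))\big)$. The bipolar recurrent projection neural network (RPNN) is defined as follows: with $c^{-1}_{\eta\xi}$ the entries of $C^{-1}$, set $v_i^\xi=\sum_{\eta=1}^pu_i^\eta c^{-1}_{\eta\xi}$; from a state $\boldsymbol{x}(t)\in\{-1,+1\}^n$ compute $w_\xi(t)=f(\langle\boldsymbol{x}(t),\boldsymbol{u}^\xi\rangle/n)$,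 $a_i(t)=\sum_{\xi=1}^pw_\xi(t)v_i^\xi$, and set $x_i(t+1)=\mathrm{sgn}(a_i(t))$ if $a_i(t)\neq0$ and $x_i(t+1)=x_i(t)$ otherwise. If the solutions of the quadratic problems satisfy $0<\beta_i^\xi<\rho$ for all $i=1,\ldots,n$ and $\xi=1,\ldots,p$, then the RKAM coincides with the bipolar RPNN (their activation sums $\sum_\xi\beta_i^\xi u_i^\xi\kappa(\boldsymbol{u}^\xi,\boldsymbol{x})$ and $\sum_\xi w_\xi v_i^\xi$ agree for every state $\boldsymbol{x}$). Alternatively, the RKAM and the bipolar RPNN coincide if $0<v_i^\xi u_i^\xi<\rho$ for all $i=1,\ldots,n$ and $\xi=1,\ldots,p$.
   Context: $\langle\boldsymbol{x},\boldsymbol{y}\rangle=\sum_{i=1}^n x_iy_i$ for bipolar vectors $\boldsymbol{x},\boldsymbol{y}\in\{-1,+1\}^n$; $\mathrm{sgn}$ is the sign function. *)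

theory Defs
  imports "HOL-Analysis.Analysis"
begin

text \<open>Bipolar vectors in dimension n = CARD('n); components indexed by the finite type 'n.
  The inner product of real^'n is the sum of componentwise products.\<close>
definition bipolar :: "(real^'n) set" where
  "bipolar = {x. \<forall>i. x$i = -1 \<or> x$i = 1}"

definition psd_kernel :: "('a \<Rightarrow> 'a \<Rightarrow> real) \<Rightarrow> 'a set \<Rightarrow> bool" where
  "psd_kernel K S \<longleftrightarrow> (\<forall>(m::nat) (xs::nat \<Rightarrow> 'a) (c::nat \<Rightarrow> real).
      (\<forall>k<m. xs k \<in> S) \<longrightarrow> (\<Sum>k<m. \<Sum>l<m. c k * c l * K (xs k) (xs l)) \<ge> 0)"

definition kern :: "(real \<Rightarrow> real) \<Rightarrow> real^'n \<Rightarrow> real^'n \<Rightarrow> real" where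
  "kern f x y = f ((x \<bullet> y) / real CARD('n))"

definition gram :: "(real \<Rightarrow> real) \<Rightarrow> ('p::finite \<Rightarrow> real^'n) \<Rightarrow> real^'p^'p" where
  "gram f u = (\<chi> \<eta> \<xi>. f ((u \<xi> \<bullet> u \<eta>) / real CARD('n)))"

definition Qobj :: "(real \<Rightarrow> real) \<Rightarrow> ('p::finite \<Rightarrow> real^'n) \<Rightarrow> 'n \<Rightarrow> ('p \<Rightarrow> real) \<Rightarrow> real" where
  "Qobj f u i b = (1/2) * (\<Sum>\<xi>\<in>UNIV. \<Sum>\<eta>\<in>UNIV. b \<xi> * b \<eta> * (u \<xi>)$i * (u \<eta>)$i * kern f (u \<xi>) (u \<eta>))
                  - (\<Sum>\<xi>\<in>UNIV. b \<xi>)"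

definition box_feasible :: "real \<Rightarrow> ('p \<Rightarrow> real) \<Rightarrow> bool" where
  "box_feasible \<rho> b \<longleftrightarrow> (\<forall>\<xi>. 0 \<le> b \<xi> \<and> b \<xi> \<le> \<rho>)"

definition is_QP_solution :: "(real \<Rightarrow> real) \<Rightarrow> ('p::finite \<Rightarrow> real^'n) \<Rightarrow> real \<Rightarrow> 'n \<Rightarrow> ('p \<Rightarrow> real) \<Rightarrow> bool" where
  "is_QP_solution f u \<rho> i b \<longleftrightarrow> box_feasible \<rho> b \<and>
     (\<forall>\<gamma>. box_feasible \<rho> \<gamma> \<longrightarrow> Qobj f u i b \<le> Qobj f u i \<gamma>)"

definition rkam_act :: "(real \<Rightarrow> real) \<Rightarrow> ('p::finite \<Rightarrow> real^'n) \<Rightarrow> ('n \<Rightarrow> 'p \<Rightarrow> real) \<Rightarrow> 'n \<Rightarrow> real^'n \<Rightarrow> real" where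
  "rkam_act f u \<beta> i x = (\<Sum>\<xi>\<in>UNIV. \<beta> i \<xi> * (u \<xi>)$i * kern f (u \<xi>) x)"

definition rkam_step :: "(real \<Rightarrow> real) \<Rightarrow> ('p::finite \<Rightarrow> real^'n) \<Rightarrow> ('n \<Rightarrow> 'p \<Rightarrow> real) \<Rightarrow> real^'n \<Rightarrow> real^'n" where
  "rkam_step f u \<beta> x = (\<chi> i. sgn (rkam_act f u \<beta> i x))"

definition rpnn_v :: "(real \<Rightarrow> real) \<Rightarrow> ('p::finite \<Rightarrow> real^'n) \<Rightarrow> 'n \<Rightarrow> 'p \<Rightarrow> real" where
  "rpnn_v f u i \<xi> = (\<Sum>\<eta>\<in>UNIV. (u \<eta>)$i * matrix_inv (gram f u) $ \<eta> $ \<xi>)"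

definition rpnn_act :: "(real \<Rightarrow> real) \<Rightarrow> ('p::finite \<Rightarrow> real^'n) \<Rightarrow> 'n \<Rightarrow> real^'n \<Rightarrow> real" where
  "rpnn_act f u i x = (\<Sum>\<xi>\<in>UNIV. f ((x \<bullet> u \<xi>) / real CARD('n)) * rpnn_v f u i \<xi>)"

end

(* Substituting y_xi = beta_i^xi u_i^xi, an involution because u_i^xi = +-1, turns Q into the
   convex quadratic 1/2 y'Cy - <u_i, y> with the positive semidefinite Gram matrix C. Its only
   stationary point is y = C^-1 u_i, i.e. y_xi = v_i^xi. A minimiser in the interior of the box is
   stationary, which gives the first claim. For the second, if v_i^xi u_i^xi lies in the box, the
   stationary point is feasible and therefore, C being invertible, the unique minimiser beta_i.
   Either way beta_i^xi u_i^xi = v_i^xi, and the two activation sums agree term by term. *)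

theory Submission
  imports Defs
begin

definition quadratic_fun :: "real^'n^'n \<Rightarrow> real^'n \<Rightarrow> real^'n \<Rightarrow> real" where
  "quadratic_fun A c x = x \<bullet> (A *v x) / 2 - c \<bullet> x"

lemma inner_matrix_vector_commute:
  fixes A :: "real^'n^'n"
  assumes "transpose A = A"
  shows "x \<bullet> (A *v y) = y \<bullet> (A *v x)"
proof -
  have "x \<bullet> (A *v y) = (transpose A *v x) \<bullet> y"
    by (simp add: dot_lmul_matrix)
  then show ?thesis
    by (simp add: assms inner_commute)
qed

lemma quadratic_fun_add:
  assumes "transpose A = A"
  shows "quadratic_fun A c (x + d) = quadratic_fun A c x + d \<bullet> (A *v x - c) + d \<bullet> (A *v d) / 2"
proof -
  have "(x + d) \<bullet> (A *v (x + d)) = x \<bullet> (A *v x) + 2 * (d \<bullet> (A *v x)) + d \<bullet> (A *v d)"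
    using inner_matrix_vector_commute[OF assms, of x d]
    by (simp add: matrix_vector_right_distrib inner_add_left inner_add_right)
  then show ?thesis
    by (simp add: quadratic_fun_def inner_add_right inner_diff_right inner_commute[of c d])
qed

lemma linear_coeff_zero_if_nonneg_near_0:
  fixes g h \<delta> :: real
  assumes "\<delta> > 0" and "\<And>t. \<bar>t\<bar> < \<delta> \<Longrightarrow> 0 \<le> t * g + t^2 * h"
  shows "g = 0"
proof (rule DERIV_local_min)
  show "((\<lambda>t. t * g + t^2 * h) has_real_derivative g) (at 0)"
    by (auto intro!: derivative_eq_intros)
qed (use assms in auto)

lemma stationary_if_min_along_axes:
  assumes sym: "transpose A = A"
    and min: "\<And>k. \<exists>\<delta>>0. \<forall>t. \<bar>t\<bar> < \<delta> \<longrightarrow>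
                  quadratic_fun A c x \<le> quadratic_fun A c (x + t *\<^sub>R axis k 1)"
  shows "A *v x = c"
proof -
  have "(A *v x - c) $ k = 0" for k
  proof -
    obtain \<delta> where "\<delta> > 0" and \<delta>: "\<forall>t. \<bar>t\<bar> < \<delta> \<longrightarrow>
        quadratic_fun A c x \<le> quadratic_fun A c (x + t *\<^sub>R axis k 1)"
      using min by blast
    have "quadratic_fun A c (x + t *\<^sub>R axis k 1)
        = quadratic_fun A c x + t * (A *v x - c) $ k + t^2 * (A $ k $ k / 2)" for t
      by (simp add: quadratic_fun_add[OF sym] inner_axis' matrix_vector_mult_scaleR
          matrix_vector_mult_basis column_def power2_eq_square)
    with \<delta> show ?thesis
      by (intro linear_coeff_zero_if_nonneg_near_0[OF \<open>\<delta> > 0\<close>, where h="A $ k $ k / 2"]) auto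
  qed
  then show ?thesis
    by (simp add: vec_eq_iff)
qed

lemma psd_quadratic_form_eq_0_imp_mult_eq_0:
  fixes A :: "real^'n^'n"
  assumes sym: "transpose A = A" and psd: "\<And>y. 0 \<le> y \<bullet> (A *v y)" and "d \<bullet> (A *v d) = 0"
  shows "A *v d = 0"
proof -
  let ?w = "A *v d"
  have expand: "quadratic_fun A 0 (d + t *\<^sub>R ?w) = t * (?w \<bullet> ?w) + t^2 * (?w \<bullet> (A *v ?w) / 2)" for t
  proof -
    have "quadratic_fun A 0 (d + t *\<^sub>R ?w)
        = quadratic_fun A 0 d + (t *\<^sub>R ?w) \<bullet> (?w - 0) + (t *\<^sub>R ?w) \<bullet> (A *v (t *\<^sub>R ?w)) / 2"
      by (rule quadratic_fun_add[OF sym])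
    then show ?thesis
      using \<open>d \<bullet> (A *v d) = 0\<close>
      by (simp add: quadratic_fun_def matrix_vector_mult_scaleR power2_eq_square)
  qed
  have "0 \<le> t * (?w \<bullet> ?w) + t^2 * (?w \<bullet> (A *v ?w) / 2)" for t
    using psd[of "d + t *\<^sub>R ?w"] expand[of t] by (simp only: quadratic_fun_def inner_zero_left)
  then have "?w \<bullet> ?w = 0"
    using linear_coeff_zero_if_nonneg_near_0[of 1 "?w \<bullet> ?w" "?w \<bullet> (A *v ?w) / 2"] by simp
  then show ?thesis
    by simp
qed

lemma stationary_point_unique_minimizer:
  assumes sym: "transpose A = A" and psd: "\<And>y. 0 \<le> y \<bullet> (A *v y)" and "invertible A"
    and "A *v x = c" and "quadratic_fun A c y \<le> quadratic_fun A c x"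
  shows "y = x"
proof -
  define d where "d = y - x"
  have "quadratic_fun A c y = quadratic_fun A c x + d \<bullet> (A *v d) / 2"
    using quadratic_fun_add[OF sym, of c x d] \<open>A *v x = c\<close> by (simp add: d_def)
  with assms(5) psd[of d] have "d \<bullet> (A *v d) = 0"
    by linarith
  then have "A *v d = A *v 0"
    using psd_quadratic_form_eq_0_imp_mult_eq_0[OF sym psd] by simp
  then have "d = 0"
    by (rule injD[OF inj_matrix_vector_mult[OF \<open>invertible A\<close>]])
  then show ?thesis
    by (simp add: d_def)
qed

lemma matrix_inv_left:
  assumes "invertible A"
  shows "matrix_inv A ** A = mat 1"
  using someI_ex[OF assms[unfolded invertible_def]] by (simp add: matrix_inv_def)

lemma kern_commute: "kern f x y = kern f y x"
  by (simp add: kern_def inner_commute)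

lemma gram_nth: "gram f u $ \<eta> $ \<xi> = kern f (u \<eta>) (u \<xi>)"
  by (simp add: gram_def kern_def inner_commute)

lemma transpose_gram: "transpose (gram f u) = gram f u"
  by (simp add: vec_eq_iff transpose_def gram_nth kern_commute)

lemma psd_kernel_gram:
  fixes u :: "'p::finite \<Rightarrow> real^'n::finite"
  assumes "psd_kernel (kern f) S" and "\<And>\<xi>. u \<xi> \<in> S"
  shows "0 \<le> y \<bullet> (gram f u *v y)"
proof -
  define G where "G \<xi> \<eta> = y $ \<xi> * y $ \<eta> * kern f (u \<xi>) (u \<eta>)" for \<xi> \<eta>
  obtain h where h: "bij_betw h {..<CARD('p)} (UNIV :: 'p set)"
    using ex_bij_betw_nat_finite[of "UNIV :: 'p set"] by (auto simp: atLeast0LessThan)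
  have reindex: "(\<Sum>k<CARD('p). g (h k)) = (\<Sum>\<xi>\<in>UNIV. g \<xi>)" for g :: "'p \<Rightarrow> real"
    using sum.reindex_bij_betw[OF h] .
  have "0 \<le> (\<Sum>k<CARD('p). \<Sum>l<CARD('p). G (h k) (h l))"
    using assms(1) unfolding psd_kernel_def G_def
    by (elim allE[of _ "CARD('p)"] allE[of _ "\<lambda>k. u (h k)"] allE[of _ "\<lambda>k. y $ h k"])
      (simp add: assms(2))
  also have "\<dots> = (\<Sum>k<CARD('p). \<Sum>\<eta>\<in>UNIV. G (h k) \<eta>)"
    by (simp only: reindex)
  also have "\<dots> = (\<Sum>\<xi>\<in>UNIV. \<Sum>\<eta>\<in>UNIV. G \<xi> \<eta>)"
    by (rule reindex)
  also have "\<dots> = y \<bullet> (gram f u *v y)"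
    by (simp add: G_def inner_vec_def matrix_vector_mult_def gram_nth sum_distrib_left mult_ac)
  finally show ?thesis .
qed

lemma bipolar_nth_abs: "x \<in> bipolar \<Longrightarrow> \<bar>x $ i\<bar> = 1"
  unfolding bipolar_def by (drule CollectD, drule spec[of _ i]) auto

lemma bipolar_nth_square: "x \<in> bipolar \<Longrightarrow> x $ i * x $ i = 1"
  unfolding bipolar_def by (drule CollectD, drule spec[of _ i]) auto

definition signed_coeffs :: "('p::finite \<Rightarrow> real^'n) \<Rightarrow> 'n \<Rightarrow> ('p \<Rightarrow> real) \<Rightarrow> real^'p" where
  "signed_coeffs u i b = (\<chi> \<xi>. b \<xi> * u \<xi> $ i)"

definition pattern_coords :: "('p::finite \<Rightarrow> real^'n) \<Rightarrow> 'n \<Rightarrow> real^'p" where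
  "pattern_coords u i = (\<chi> \<xi>. u \<xi> $ i)"

lemma Qobj_eq_quadratic_fun:
  assumes "\<And>\<xi>. u \<xi> \<in> bipolar"
  shows "Qobj f u i b = quadratic_fun (gram f u) (pattern_coords u i) (signed_coeffs u i b)"
proof -
  have "(\<Sum>\<xi>\<in>UNIV. u \<xi> $ i * (b \<xi> * u \<xi> $ i)) = (\<Sum>\<xi>\<in>UNIV. b \<xi>)"
    using bipolar_nth_square[OF assms] by (simp add: algebra_simps)
  then show ?thesis
    by (simp add: Qobj_def quadratic_fun_def signed_coeffs_def pattern_coords_def inner_vec_def
        matrix_vector_mult_def gram_nth sum_distrib_left sum_divide_distrib ac_simps)
qed

lemma rpnn_v_eq_vector_matrix_mult:
  "(\<chi> \<xi>. rpnn_v f u i \<xi>) = pattern_coords u i v* matrix_inv (gram f u)"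
  by (simp add: vec_eq_iff rpnn_v_def pattern_coords_def vector_matrix_mult_def mult.commute)

lemma gram_mult_rpnn_v:
  assumes "invertible (gram f u)"
  shows "gram f u *v (\<chi> \<xi>. rpnn_v f u i \<xi>) = pattern_coords u i"
proof -
  have "gram f u *v (\<chi> \<xi>. rpnn_v f u i \<xi>) = (\<chi> \<xi>. rpnn_v f u i \<xi>) v* transpose (gram f u)"
    by simp
  also have "\<dots> = pattern_coords u i v* (matrix_inv (gram f u) ** gram f u)"
    by (simp add: transpose_gram rpnn_v_eq_vector_matrix_mult vector_matrix_mul_assoc)
  finally show ?thesis
    by (simp add: matrix_inv_left[OF assms])
qed

lemma signed_coeffs_eq_rpnn_v_if_interior:
  fixes u :: "'p::finite \<Rightarrow> real^'n::finite"
  assumes bip: "\<And>\<xi>. u \<xi> \<in> bipolar" and inv: "invertible (gram f u)"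
    and sol: "is_QP_solution f u \<rho> i b" and interior: "\<And>\<xi>. 0 < b \<xi> \<and> b \<xi> < \<rho>"
  shows "signed_coeffs u i b = (\<chi> \<xi>. rpnn_v f u i \<xi>)"
proof -
  let ?q = "quadratic_fun (gram f u) (pattern_coords u i)"
  have "gram f u *v signed_coeffs u i b = pattern_coords u i"
  proof (rule stationary_if_min_along_axes[OF transpose_gram])
    fix k
    define \<delta> where "\<delta> = min (b k) (\<rho> - b k)"
    have "?q (signed_coeffs u i b) \<le> ?q (signed_coeffs u i b + t *\<^sub>R axis k 1)" if "\<bar>t\<bar> < \<delta>" for t
    proof -
      define b' where "b' \<xi> = b \<xi> + (if \<xi> = k then t * u k $ i else 0)" for \<xi>
      have "\<bar>t * u k $ i\<bar> = \<bar>t\<bar>"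
        using bipolar_nth_abs[OF bip] by (simp add: abs_mult)
      then have "box_feasible \<rho> b'"
        using interior that by (auto simp: box_feasible_def b'_def \<delta>_def less_imp_le)
      then have "Qobj f u i b \<le> Qobj f u i b'"
        using sol by (simp add: is_QP_solution_def)
      moreover have "signed_coeffs u i b' = signed_coeffs u i b + t *\<^sub>R axis k 1"
        using bipolar_nth_square[OF bip, of k i]
        by (simp add: vec_eq_iff signed_coeffs_def b'_def axis_def algebra_simps)
      ultimately show ?thesis
        by (simp add: Qobj_eq_quadratic_fun[OF bip])
    qed
    moreover have "\<delta> > 0"
      using interior[of k] by (simp add: \<delta>_def)
    ultimately show "\<exists>\<delta>>0. \<forall>t. \<bar>t\<bar> < \<delta> \<longrightarrow> ?q (signed_coeffs u i b) \<le> ?q (signed_coeffs u i b + t *\<^sub>R axis k 1)"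
      by blast
  qed
  also have "\<dots> = gram f u *v (\<chi> \<xi>. rpnn_v f u i \<xi>)"
    using gram_mult_rpnn_v[OF inv] ..
  finally show ?thesis
    by (rule injD[OF inj_matrix_vector_mult[OF inv]])
qed

lemma signed_coeffs_eq_rpnn_v_if_feasible:
  fixes u :: "'p::finite \<Rightarrow> real^'n::finite"
  assumes psd: "psd_kernel (kern f) (bipolar :: (real^'n) set)" and bip: "\<And>\<xi>. u \<xi> \<in> bipolar"
    and inv: "invertible (gram f u)" and sol: "is_QP_solution f u \<rho> i b"
    and feasible: "box_feasible \<rho> (\<lambda>\<xi>. rpnn_v f u i \<xi> * u \<xi> $ i)"
  shows "signed_coeffs u i b = (\<chi> \<xi>. rpnn_v f u i \<xi>)"
proof (rule stationary_point_unique_minimizer[OF transpose_gram psd_kernel_gram[OF psd bip] inv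
      gram_mult_rpnn_v[OF inv]])
  have "signed_coeffs u i (\<lambda>\<xi>. rpnn_v f u i \<xi> * u \<xi> $ i) = (\<chi> \<xi>. rpnn_v f u i \<xi>)"
    using bipolar_nth_square[OF bip] by (simp add: signed_coeffs_def mult.assoc)
  moreover have "Qobj f u i b \<le> Qobj f u i (\<lambda>\<xi>. rpnn_v f u i \<xi> * u \<xi> $ i)"
    using sol feasible by (simp add: is_QP_solution_def)
  ultimately show "quadratic_fun (gram f u) (pattern_coords u i) (signed_coeffs u i b)
      \<le> quadratic_fun (gram f u) (pattern_coords u i) (\<chi> \<xi>. rpnn_v f u i \<xi>)"
    by (simp add: Qobj_eq_quadratic_fun[OF bip])
qed

lemma rkam_act_eq_rpnn_act:
  assumes "signed_coeffs u i (\<beta> i) = (\<chi> \<xi>. rpnn_v f u i \<xi>)"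
  shows "rkam_act f u \<beta> i x = rpnn_act f u i x"
proof -
  have "\<beta> i \<xi> * u \<xi> $ i = rpnn_v f u i \<xi>" for \<xi>
    using assms by (simp add: vec_eq_iff signed_coeffs_def)
  then show ?thesis
    by (simp add: rkam_act_def rpnn_act_def kern_def inner_commute mult.commute)
qed

theorem theorem3:
  fixes f :: "real \<Rightarrow> real"
    and u :: "'p::finite \<Rightarrow> real^'n::finite"
    and \<rho> :: real
    and \<beta> :: "'n \<Rightarrow> 'p \<Rightarrow> real"
  assumes "continuous_on {-1..1} f"
    and "mono_on {-1..1} f"
    and "psd_kernel (kern f) (bipolar :: (real^'n) set)"
    and "\<forall>\<xi>. u \<xi> \<in> bipolar"
    and "invertible (gram f u)"
    and "\<rho> > 0"
    and "\<forall>i. is_QP_solution f u \<rho> i (\<beta> i)"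
  shows "((\<forall>i \<xi>. 0 < \<beta> i \<xi> \<and> \<beta> i \<xi> < \<rho>) \<longrightarrow>
            (\<forall>i. \<forall>x\<in>bipolar. rkam_act f u \<beta> i x = rpnn_act f u i x))
       \<and> ((\<forall>i \<xi>. 0 < rpnn_v f u i \<xi> * (u \<xi>)$i \<and> rpnn_v f u i \<xi> * (u \<xi>)$i < \<rho>) \<longrightarrow>
            (\<forall>i. \<forall>x\<in>bipolar. rkam_act f u \<beta> i x = rpnn_act f u i x))"
proof (intro conjI impI allI ballI; rule rkam_act_eq_rpnn_act)
  fix i
  assume "\<forall>i \<xi>. 0 < \<beta> i \<xi> \<and> \<beta> i \<xi> < \<rho>"
  then show "signed_coeffs u i (\<beta> i) = (\<chi> \<xi>. rpnn_v f u i \<xi>)"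
    using assms(4,5,7) by (intro signed_coeffs_eq_rpnn_v_if_interior) auto
next
  fix i
  assume "\<forall>i \<xi>. 0 < rpnn_v f u i \<xi> * u \<xi> $ i \<and> rpnn_v f u i \<xi> * u \<xi> $ i < \<rho>"
  then have "box_feasible \<rho> (\<lambda>\<xi>. rpnn_v f u i \<xi> * u \<xi> $ i)"
    by (simp add: box_feasible_def less_imp_le)
  then show "signed_coeffs u i (\<beta> i) = (\<chi> \<xi>. rpnn_v f u i \<xi>)"
    using assms(3,4,5,7) by (intro signed_coeffs_eq_rpnn_v_if_feasible) auto
qed

end
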